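(* Consider a human–algorithm system (as defined in the context) that exhibits fairness of benefit, i.e. $c(a_i,h_i)<h_i$ for every $i\in\{1,\dots,N\}$. Then the system does not exhibit complementarity.
   Context: A human–algorithm system consists of: an integer $N\ge1$ (number of regimes); probabilities $p_1,\dots,p_N\ge 0$ with $\sum_i p_i=1$; algorithmic losses $a_1,\dots,a_N\ge 0$ and unaided-human losses $h_1,\dots,h_N\ge0$; and a combining function $c:[0,\infty)^2\to\mathbb{R}$ satisfying $\min(a,h)\le c(a,h)\le\max(a,h)$ for all $a,h\ge0$, where $c(a_i,h_i)$ is the loss of the combined system in regime $i$. Write $A=\sum_i p_i a_i$ and $H=\sum_i p_i h_i$. The system exhibits complementarity if $\sum_{i=1}^N p_i\,c(a_i,h_i)<\min(A,H)$. *)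

theory Defs
  imports Main Complex_Main
begin

definition combining_function :: "(real \<Rightarrow> real \<Rightarrow> real) \<Rightarrow> bool" where
  "combining_function c \<longleftrightarrow>
     (\<forall>a h. 0 \<le> a \<longrightarrow> 0 \<le> h \<longrightarrow> min a h \<le> c a h \<and> c a h \<le> max a h)"

definition ha_system :: "nat \<Rightarrow> (nat \<Rightarrow> real) \<Rightarrow> (nat \<Rightarrow> real) \<Rightarrow> (nat \<Rightarrow> real)
    \<Rightarrow> (real \<Rightarrow> real \<Rightarrow> real) \<Rightarrow> bool" where
  "ha_system N p a h c \<longleftrightarrow> N \<ge> 1 \<and>
     (\<forall>i\<in>{1..N}. 0 \<le> p i \<and> 0 \<le> a i \<and> 0 \<le> h i) \<and>
     (\<Sum>i=1..N. p i) = 1 \<and> combining_function c"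

definition complementarity :: "nat \<Rightarrow> (nat \<Rightarrow> real) \<Rightarrow> (nat \<Rightarrow> real) \<Rightarrow> (nat \<Rightarrow> real)
    \<Rightarrow> (real \<Rightarrow> real \<Rightarrow> real) \<Rightarrow> bool" where
  "complementarity N p a h c \<longleftrightarrow>
     (\<Sum>i=1..N. p i * c (a i) (h i)) < min (\<Sum>i=1..N. p i * a i) (\<Sum>i=1..N. p i * h i)"

definition fairness_of_benefit :: "nat \<Rightarrow> (nat \<Rightarrow> real) \<Rightarrow> (nat \<Rightarrow> real)
    \<Rightarrow> (real \<Rightarrow> real \<Rightarrow> real) \<Rightarrow> bool" where
  "fairness_of_benefit N a h c \<longleftrightarrow> (\<forall>i\<in>{1..N}. c (a i) (h i) < h i)"

end

theory Submission
  imports Defs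
begin

(* Since c(a,h) lies between a and h, the strict inequality c(a,h) < h forces c(a,h) >= a.
   Under fairness of benefit this holds in every regime, so averaging gives that the
   combined loss is at least the algorithmic loss A >= min(A,H). *)

lemma combining_function_ge_fst_if_lt_snd:
  assumes "combining_function c" and "0 \<le> a" and "0 \<le> h" and "c a h < h"
  shows "a \<le> c a h"
proof -
  have "min a h \<le> c a h" using assms(1-3) by (simp add: combining_function_def)
  with \<open>c a h < h\<close> show ?thesis by (simp add: min_def split: if_splits)
qed

lemma fairness_of_benefit_algorithmic_loss_le:
  assumes "ha_system N p a h c" and "fairness_of_benefit N a h c"
  shows "(\<Sum>i=1..N. p i * a i) \<le> (\<Sum>i=1..N. p i * c (a i) (h i))"
proof (rule sum_mono)
  fix i assume i: "i \<in> {1..N}"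
  with assms(1) have "0 \<le> p i" "0 \<le> a i" "0 \<le> h i" "combining_function c"
    by (auto simp: ha_system_def)
  moreover from assms(2) i have "c (a i) (h i) < h i"
    by (simp add: fairness_of_benefit_def)
  ultimately show "p i * a i \<le> p i * c (a i) (h i)"
    by (simp add: mult_left_mono combining_function_ge_fst_if_lt_snd)
qed

theorem lemma8:
  fixes N :: nat and p a h :: "nat \<Rightarrow> real" and c :: "real \<Rightarrow> real \<Rightarrow> real"
  assumes "ha_system N p a h c"
    and "fairness_of_benefit N a h c"
  shows "\<not> complementarity N p a h c"
  using fairness_of_benefit_algorithmic_loss_le[OF assms]
  by (simp add: complementarity_def)

end
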